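(* Let $k\ge1$. Every $k$-primitive element $f\in\mathcal{A}$ can be written as a polynomial of degree at most $k$, with complex coefficients, in finitely many $1$-primitive elements of $\mathcal{A}$.
   Context: Let $G$ be an abelian group written additively with identity $e=0$ (in the paper, $G$ is the group, under pointwise addition, of finite complex linear combinations of characteristic functions of measurable subsets of a measurable set $H$). Let $\mathcal{A}$ be an algebra of complex-valued functions on $G$ (pointwise operations, containing the constants) such that for every $f\in\mathcal{A}$ there exist finitely many $f'_i,f''_i\in\mathcal{A}$ with $f(x+y)=\sum_i f'_i(x)f''_i(y)$ for all $x,y\in G$ (so that the coproduct $\Delta f(x,y)=f(x+y)$ makes $\mathcal{A}$ a commutative, cocommutative bialgebra with counit $\epsilon(f)=f(0)$; in the paper $\mathcal{A}$ is the algebra of smooth functions on $G$). Coderivatives: for $f\colon G\to\mathbb{C}$ define $(\mathcal{L}f)(x_0,x_1)=f(x_0+x_1)-f(x_0)$ and recursively $(\mathcal{L}^k f)(x_0,x_1,\dots,x_k)=(\mathcal{L}^{k-1}f)(x_0+x_1,x_2,\dots,x_k)-(\mathcal{L}^{k-1}f)(x_0,x_2,\dots,x_k)$. Write $(\mathcal{L}^kf)(e)$ for the function $(x_1,\dots,x_k)\mapsto(\mathcal{L}^kf)(0,x_1,\dots,x_k)$ on $G^k$; explicitly $(\mathcal{L}^kf)(e)(x_1,\dots,x_k)=\sum_{S\subseteq\{1,\dots,k\}}(-1)^{k-|S|}f\big(\sum_{i\in S}x_i\big)$. A function $f$ is called $k$-primitive if $(\mathcal{L}^r f)(e)=0$ for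 all $r>k$ while $(\mathcal{L}^k f)(e)\neq0$. In particular $f$ is $1$-primitive iff $f$ is nonconstant and $f(x+y)-f(x)-f(y)+f(0)=0$ for all $x,y$ (i.e. $f-f(0)$ is additive). *)

theory Defs
  imports Complex_Main
begin

text \<open>Coderivatives. coder f x0 [x1,...,xk] is (L^k f)(x0,x1,...,xk), following the
recursive definition (L^k f)(x0,x1,...,xk) = (L^(k-1) f)(x0+x1,x2,...,xk) - (L^(k-1) f)(x0,x2,...,xk),
with L^0 f = f.\<close>
fun coder :: "('a::ab_group_add \<Rightarrow> complex) \<Rightarrow> 'a \<Rightarrow> 'a list \<Rightarrow> complex" where
  "coder f x0 [] = f x0"
| "coder f x0 (x1 # xs) = coder f (x0 + x1) xs - coder f x0 xs"

text \<open>(L^k f)(e) as a function on G^k (tuples represented as lists of length k).\<close>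
definition coder_e :: "nat \<Rightarrow> ('a::ab_group_add \<Rightarrow> complex) \<Rightarrow> 'a list \<Rightarrow> complex" where
  "coder_e k f = (\<lambda>xs. if length xs = k then coder f 0 xs else 0)"

definition k_primitive :: "nat \<Rightarrow> ('a::ab_group_add \<Rightarrow> complex) \<Rightarrow> bool" where
  "k_primitive k f \<longleftrightarrow>
     (\<forall>r>k. \<forall>xs. length xs = r \<longrightarrow> coder f 0 xs = 0) \<and>
     (\<exists>xs. length xs = k \<and> coder f 0 xs \<noteq> 0)"

definition coproduct_algebra :: "('a::ab_group_add \<Rightarrow> complex) set \<Rightarrow> bool" where
  "coproduct_algebra A \<longleftrightarrow>
     (\<forall>c. (\<lambda>_. c) \<in> A) \<and>
     (\<forall>f\<in>A. \<forall>g\<in>A. (\<lambda>x. f x + g x) \<in> A) \<and>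
     (\<forall>f\<in>A. \<forall>g\<in>A. (\<lambda>x. f x * g x) \<in> A) \<and>
     (\<forall>c. \<forall>f\<in>A. (\<lambda>x. c * f x) \<in> A) \<and>
     (\<forall>f\<in>A. \<exists>n f' f''. (\<forall>i<n. f' i \<in> A \<and> f'' i \<in> A) \<and>
        (\<forall>x y. f (x + y) = (\<Sum>i<(n::nat). f' i x * f'' i y)))"

definition multi_indices :: "nat \<Rightarrow> nat \<Rightarrow> (nat \<Rightarrow> nat) set" where
  "multi_indices n k = {\<alpha>. (\<forall>i\<ge>n. \<alpha> i = 0) \<and> (\<Sum>i<n. \<alpha> i) \<le> k}"

end

theory Submission
  imports Defs "HOL-Library.Function_Algebras"
begin

text \<open>Say that h has degree at most d if all coderivatives of h of order greater than d vanish.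
  If h has degree at most d = e + 1, its top coderivative M(y1, ..., yd) = (L^d h)(0, y1, ..., yd)
  is symmetric and additive in each argument. The one-variable slices of M are therefore additive,
  and by the coproduct condition they lie in the span of finitely many elements of A. An
  interpolation basis g1, ..., gr of that span (gj(pl) = 1 if j = l and 0 otherwise) consists of
  additive, hence 1-primitive, elements of A, and M(y, z2, ..., zd) = sum over j of
  M(pj, z2, ..., zd) gj(y). Iterating over the arguments, the diagonal D(x) = M(x, ..., x) is a
  polynomial of degree d in the gj. Since L^d D = d! M, the function h - D / d! has degree at
  most e, and induction on the degree finishes the proof.\<close>

section \<open>Coderivatives\<close>

lemma coder_linear:
  "coder (\<lambda>x. c * f x + g x) x0 ys = c * coder f x0 ys + coder g x0 ys"
  by (induction ys arbitrary: x0) (auto simp: algebra_simps)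

lemma coder_sum_list:
  "coder (\<lambda>x. \<Sum>u\<leftarrow>us. F u x) x0 ys = (\<Sum>u\<leftarrow>us. coder (F u) x0 ys)"
proof (induction us)
  case Nil
  show ?case by (induction ys arbitrary: x0) simp_all
next
  case (Cons u us)
  then show ?case using coder_linear[of 1 "F u" "\<lambda>x. \<Sum>u\<leftarrow>us. F u x" x0 ys] by simp
qed

lemma coder_translate: "coder (\<lambda>x. h (x + t)) x0 ys = coder h (x0 + t) ys"
  by (induction ys arbitrary: x0) (auto simp: ac_simps)

lemma coder_Cons_diff: "coder h x0 (y # ys) = coder (\<lambda>x. h (x + y) - h x) x0 ys"
  using coder_linear[of "-1" h "\<lambda>x. h (x + y)" x0 ys] by (simp add: coder_translate)

lemma coder_move_to_front: "coder h x0 (ps @ y # zs) = coder h x0 (y # ps @ zs)"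
  by (induction ps arbitrary: x0) (simp_all add: ac_simps)

definition coder_deg_le :: "('a::ab_group_add \<Rightarrow> complex) \<Rightarrow> nat \<Rightarrow> bool" where
  "coder_deg_le h d \<longleftrightarrow> (\<forall>x0 ys. d < length ys \<longrightarrow> coder h x0 ys = 0)"

lemma coder_deg_le_iff_base_0:
  "coder_deg_le h d \<longleftrightarrow> (\<forall>ys. d < length ys \<longrightarrow> coder h 0 ys = 0)"
proof
  assume base_0: "\<forall>ys. d < length ys \<longrightarrow> coder h 0 ys = 0"
  show "coder_deg_le h d"
    unfolding coder_deg_le_def
  proof (intro allI impI)
    fix x0 and ys :: "'a list"
    assume "d < length ys"
    then have "coder h 0 (x0 # ys) = 0" "coder h 0 ys = 0"
      using base_0 by (simp_all del: coder.simps)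
    then show "coder h x0 ys = 0" by simp
  qed
qed (simp add: coder_deg_le_def)

lemma coder_deg_le_iff_exact:
  "coder_deg_le h d \<longleftrightarrow> (\<forall>x0 ys. length ys = Suc d \<longrightarrow> coder h x0 ys = 0)"
proof
  assume exact: "\<forall>x0 ys. length ys = Suc d \<longrightarrow> coder h x0 ys = 0"
  have "coder h x0 ys = 0" if "length ys = Suc d + n" for n x0 ys
    using that
  proof (induction n arbitrary: x0 ys)
    case 0
    then show ?case using exact by simp
  next
    case (Suc n)
    then obtain y ys' where "ys = y # ys'" "length ys' = Suc d + n"
      by (cases ys) auto
    then show ?case using Suc.IH by simp
  qed
  then show "coder_deg_le h d"
    unfolding coder_deg_le_def by (auto simp: less_iff_Suc_add)
qed (simp add: coder_deg_le_def)

lemma k_primitive_iff_coder_deg_le: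
  "k_primitive k f \<longleftrightarrow> coder_deg_le f k \<and> (\<exists>xs. length xs = k \<and> coder f 0 xs \<noteq> 0)"
  unfolding k_primitive_def coder_deg_le_iff_base_0 by (auto simp del: coder.simps)

lemma coder_top_indep_base:
  assumes "coder_deg_le h d" "length ys = d"
  shows "coder h x0 ys = coder h 0 ys"
proof -
  have "coder h 0 (x0 # ys) = 0"
    using assms by (simp add: coder_deg_le_def del: coder.simps)
  then show ?thesis by simp
qed

lemma coder_top_additive:
  assumes "coder_deg_le h (Suc e)" "length ys = e"
  shows "coder h 0 ((y + z) # ys) = coder h 0 (y # ys) + coder h 0 (z # ys)"
  using coder_top_indep_base[OF assms(1), of "z # ys" y] assms(2) by (simp add: algebra_simps)

lemma coder_top_additive_at:
  assumes "coder_deg_le h (Suc e)" "length qs + length zs = e"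
  shows "coder h 0 (qs @ (a + b) # zs) = coder h 0 (qs @ a # zs) + coder h 0 (qs @ b # zs)"
  using coder_top_additive[OF assms(1), of "qs @ zs" a b] assms(2)
  by (simp only: coder_move_to_front length_append)

text \<open>The i-th member of drop_one_shift y ts is ts with its i-th entry removed and all later
  entries shifted by y.\<close>

fun drop_one_shift :: "'a::ab_group_add \<Rightarrow> 'a list \<Rightarrow> 'a list list" where
  "drop_one_shift y [] = []"
| "drop_one_shift y (t # ts) = map (\<lambda>s. y + s) ts # map (Cons t) (drop_one_shift y ts)"

lemma length_drop_one_shift [simp]: "length (drop_one_shift y ts) = length ts"
  by (induction ts) auto

lemma length_mem_drop_one_shift: "u \<in> set (drop_one_shift y ts) \<Longrightarrow> Suc (length u) = length ts"
  by (induction ts arbitrary: u) auto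

text \<open>Shift the arguments from x + t to x + y + t one at a time; additivity in the slot being
  changed splits off the term with y in that slot.\<close>

lemma coder_top_shift_telescope:
  assumes "coder_deg_le h (Suc e)" "length qs + length ts = Suc e"
  shows "coder h 0 (qs @ map (\<lambda>t. x + y + t) ts) - coder h 0 (qs @ map (\<lambda>t. x + t) ts)
     = (\<Sum>u\<leftarrow>drop_one_shift y ts. coder h 0 (qs @ y # map (\<lambda>t. x + t) u))"
  using assms(2)
proof (induction ts arbitrary: qs)
  case Nil
  then show ?case by simp
next
  case (Cons t ts)
  let ?M = "coder h 0"
  let ?R1 = "map (\<lambda>s. x + y + s) ts" and ?R0 = "map (\<lambda>s. x + s) ts"
  have split: "?M (qs @ (x + y + t) # ?R1) = ?M (qs @ y # ?R1) + ?M (qs @ (x + t) # ?R1)"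
  proof -
    have "x + y + t = y + (x + t)" by (simp add: ac_simps)
    then show ?thesis
      using Cons.prems by (simp only:) (rule coder_top_additive_at[OF assms(1)], simp)
  qed
  have IH: "?M ((qs @ [x + t]) @ ?R1) - ?M ((qs @ [x + t]) @ ?R0)
      = (\<Sum>u\<leftarrow>drop_one_shift y ts. ?M ((qs @ [x + t]) @ y # map (\<lambda>t. x + t) u))"
    using Cons.prems by (intro Cons.IH) simp
  have swap: "?M ((qs @ [x + t]) @ y # zs) = ?M (qs @ y # (x + t) # zs)" for zs
    using coder_move_to_front[of h 0 "qs @ [x + t]" y zs] coder_move_to_front[of h 0 qs y "(x + t) # zs"]
    by (simp del: coder.simps)
  have "?M (qs @ map (\<lambda>t. x + y + t) (t # ts)) - ?M (qs @ map (\<lambda>t. x + t) (t # ts))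
     = ?M (qs @ y # ?R1) + (?M ((qs @ [x + t]) @ ?R1) - ?M ((qs @ [x + t]) @ ?R0))"
    using split by (simp del: coder.simps)
  also have "\<dots> = (\<Sum>u\<leftarrow>drop_one_shift y (t # ts). ?M (qs @ y # map (\<lambda>t. x + t) u))"
    unfolding IH swap by (simp del: coder.simps add: o_def add.assoc)
  finally show ?case .
qed

lemma coder_shifted_top_coder:
  assumes "coder_deg_le h (Suc e)" "length qs + length ts = Suc e" "length ys = length ts"
  shows "coder (\<lambda>x. coder h 0 (qs @ map (\<lambda>t. x + t) ts)) x0 ys = fact (length ts) * coder h 0 (qs @ ys)"
  using assms(2,3)
proof (induction ys arbitrary: qs ts x0)
  case Nil
  then show ?case by simp
next
  case (Cons y ys)
  let ?F = "\<lambda>qs ts x. coder h 0 (qs @ map (\<lambda>t. x + t) ts)"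
  have IH: "coder (?F (qs @ [y]) u) x0 ys = fact (length ys) * coder h 0 (qs @ y # ys)"
    if "u \<in> set (drop_one_shift y ts)" for u
  proof -
    have len: "length u = length ys"
      using length_mem_drop_one_shift[OF that] Cons.prems by simp
    then have "length (qs @ [y]) + length u = Suc e" "length ys = length u"
      using Cons.prems by simp_all
    from Cons.IH[OF this] len show ?thesis by (simp del: coder.simps)
  qed
  have "coder (?F qs ts) x0 (y # ys) = coder (\<lambda>x. ?F qs ts (x + y) - ?F qs ts x) x0 ys"
    by (rule coder_Cons_diff)
  also have "(\<lambda>x. ?F qs ts (x + y) - ?F qs ts x) = (\<lambda>x. \<Sum>u\<leftarrow>drop_one_shift y ts. ?F (qs @ [y]) u x)"
    using coder_top_shift_telescope[OF assms(1), of qs ts] Cons.prems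
    by (simp add: fun_eq_iff del: coder.simps)
  also have "coder \<dots> x0 ys = (\<Sum>u\<leftarrow>drop_one_shift y ts. coder (?F (qs @ [y]) u) x0 ys)"
    by (rule coder_sum_list)
  also have "\<dots> = (\<Sum>u\<leftarrow>drop_one_shift y ts. fact (length ys) * coder h 0 (qs @ y # ys))"
    using IH by (intro arg_cong[where f=sum_list] map_cong) auto
  also have "\<dots> = fact (length (y # ys)) * coder h 0 (qs @ y # ys)"
    using Cons.prems(2)[symmetric] by (simp add: sum_list_triv del: coder.simps)
  finally show ?case by (simp only: Cons.prems(2))
qed

lemma coder_top_coder_diagonal:
  assumes "coder_deg_le h (Suc e)" "length ys = Suc e"
  shows "coder (\<lambda>x. coder h 0 (replicate (Suc e) x)) x0 ys = fact (Suc e) * coder h 0 ys"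
  using coder_shifted_top_coder[OF assms(1), of "[]" "replicate (Suc e) 0" ys x0] assms(2)
  by (simp add: map_replicate_const del: coder.simps)

lemma coder_deg_le_sub_diagonal:
  assumes "coder_deg_le h (Suc e)"
  shows "coder_deg_le (\<lambda>x. h x - coder h 0 (replicate (Suc e) x) / fact (Suc e)) e"
  unfolding coder_deg_le_iff_exact
proof (intro allI impI)
  fix x0 and ys :: "'a list"
  assume len: "length ys = Suc e"
  let ?D = "\<lambda>x. coder h 0 (replicate (Suc e) x)"
  have "(\<lambda>x. h x - ?D x / fact (Suc e)) = (\<lambda>x. - (1 / fact (Suc e)) * ?D x + h x)"
    by (simp add: fun_eq_iff)
  then have "coder (\<lambda>x. h x - ?D x / fact (Suc e)) x0 ys
      = - (1 / fact (Suc e)) * coder ?D x0 ys + coder h x0 ys"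
    by (simp only: coder_linear)
  also have "\<dots> = 0"
    using coder_top_coder_diagonal[OF assms len] coder_top_indep_base[OF assms len]
    by (simp del: coder.simps fact_Suc)
  finally show "coder (\<lambda>x. h x - ?D x / fact (Suc e)) x0 ys = 0" .
qed

section \<open>Polynomials in a set of functions\<close>

inductive poly_in :: "('a \<Rightarrow> 'b::comm_semiring_1) set \<Rightarrow> nat \<Rightarrow> ('a \<Rightarrow> 'b) \<Rightarrow> bool"
  for E where
  poly_in_const: "poly_in E d (\<lambda>_. c)"
| poly_in_add: "poly_in E d p \<Longrightarrow> poly_in E d q \<Longrightarrow> poly_in E d (\<lambda>x. p x + q x)"
| poly_in_scale: "poly_in E d p \<Longrightarrow> poly_in E d (\<lambda>x. c * p x)"
| poly_in_mult: "g \<in> E \<Longrightarrow> poly_in E d p \<Longrightarrow> poly_in E (Suc d) (\<lambda>x. g x * p x)"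
| poly_in_Suc: "poly_in E d p \<Longrightarrow> poly_in E (Suc d) p"

lemma poly_in_mono: "poly_in E d p \<Longrightarrow> E \<subseteq> E' \<Longrightarrow> poly_in E' d p"
  by (induction rule: poly_in.induct) (auto intro: poly_in.intros)

lemma poly_in_sum: "(\<And>j. j < (r::nat) \<Longrightarrow> poly_in E d (f j)) \<Longrightarrow> poly_in E d (\<lambda>x. \<Sum>j<r. f j x)"
proof (induction r)
  case 0
  show ?case using poly_in_const[of E d 0] by simp
next
  case (Suc r)
  then show ?case by (simp add: poly_in_add)
qed

lemma poly_in_mem_coproduct_algebra:
  assumes "poly_in E d p" "E \<subseteq> A" "coproduct_algebra A"
  shows "p \<in> A"
  using assms by (induction rule: poly_in.induct) (auto simp: coproduct_algebra_def)

lemma poly_in_replicate: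
  assumes "\<And>ps zs x. length ps + length zs = e \<Longrightarrow> F (ps @ x # zs) = (\<Sum>j<(r::nat). F (ps @ p j # zs) * g j x)"
  shows "length ps + l = Suc e \<Longrightarrow> poly_in (g ` {..<r}) l (\<lambda>x. F (ps @ replicate l x))"
proof (induction l arbitrary: ps)
  case 0
  show ?case using poly_in_const[of _ 0 "F ps"] by simp
next
  case (Suc l)
  have "F (ps @ replicate (Suc l) x) = (\<Sum>j<r. g j x * F ((ps @ [p j]) @ replicate l x))" for x
    using assms[of ps "replicate l x" x] Suc.prems by (simp add: mult.commute)
  moreover have "poly_in (g ` {..<r}) (Suc l) (\<lambda>x. g j x * F ((ps @ [p j]) @ replicate l x))" if "j < r" for j
    using that Suc.prems by (intro poly_in_mult Suc.IH) simp_all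
  ultimately show ?case
    using poly_in_sum[of r "g ` {..<r}" "Suc l" "\<lambda>j x. g j x * F ((ps @ [p j]) @ replicate l x)"] by simp
qed

lemma sum_fun_upd_Suc:
  fixes n :: nat and \<alpha> :: "nat \<Rightarrow> nat"
  assumes "i < n"
  shows "(\<Sum>j<n. (\<alpha>(i := Suc (\<alpha> i))) j) = Suc (\<Sum>j<n. \<alpha> j)"
  using assms by (simp add: sum.remove[of "{..<n}" i])

lemma prod_power_fun_upd_Suc:
  fixes n :: nat and \<alpha> :: "nat \<Rightarrow> nat" and g :: "nat \<Rightarrow> 'b::comm_semiring_1"
  assumes "i < n"
  shows "(\<Prod>j<n. g j ^ (\<alpha>(i := Suc (\<alpha> i))) j) = g i * (\<Prod>j<n. g j ^ \<alpha> j)"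
  using assms by (simp add: prod.remove[of "{..<n}" i] mult.assoc)

lemma finite_multi_indices: "finite (multi_indices n d)"
proof (rule finite_subset)
  show "multi_indices n d \<subseteq> {\<alpha>. \<forall>i. (i \<in> {..<n} \<longrightarrow> \<alpha> i \<in> {..d}) \<and> (i \<notin> {..<n} \<longrightarrow> \<alpha> i = 0)}"
    by (auto simp: multi_indices_def intro: order.trans[OF member_le_sum])
qed (intro finite_set_of_finite_funs; simp)

definition monomial_expansion ::
    "('a \<Rightarrow> 'b::comm_semiring_1) list \<Rightarrow> nat \<Rightarrow> ((nat \<Rightarrow> nat) \<Rightarrow> 'b) \<Rightarrow> 'a \<Rightarrow> 'b" where
  "monomial_expansion gs d c x =
     (\<Sum>\<alpha>\<in>multi_indices (length gs) d. c \<alpha> * (\<Prod>i<length gs. (gs ! i) x ^ \<alpha> i))"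

lemma monomial_expansion_const:
  "(\<lambda>_. a) = monomial_expansion gs d (\<lambda>\<alpha>. if \<alpha> = (\<lambda>_. 0) then a else 0)"
proof
  fix x
  let ?M = "multi_indices (length gs) d" and ?P = "\<lambda>\<alpha>. \<Prod>i<length gs. (gs ! i) x ^ \<alpha> i"
  have "(\<lambda>_. 0) \<in> ?M"
    by (simp add: multi_indices_def)
  then have "a = (\<Sum>\<alpha>\<in>?M. if \<alpha> = (\<lambda>_. 0) then a * ?P \<alpha> else 0)"
    using finite_multi_indices by (simp only: sum.delta) simp
  also have "\<dots> = monomial_expansion gs d (\<lambda>\<alpha>. if \<alpha> = (\<lambda>_. 0) then a else 0) x"
    unfolding monomial_expansion_def by (intro sum.cong) auto
  finally show "a = \<dots>" .
qed

lemma monomial_expansion_add: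
  "monomial_expansion gs d c x + monomial_expansion gs d c' x = monomial_expansion gs d (\<lambda>\<alpha>. c \<alpha> + c' \<alpha>) x"
  by (simp add: monomial_expansion_def distrib_right sum.distrib)

lemma monomial_expansion_scale:
  "a * monomial_expansion gs d c x = monomial_expansion gs d (\<lambda>\<alpha>. a * c \<alpha>) x"
  by (simp add: monomial_expansion_def sum_distrib_left mult.assoc)

lemma monomial_expansion_Suc:
  "monomial_expansion gs d c = monomial_expansion gs (Suc d) (\<lambda>\<alpha>. if \<alpha> \<in> multi_indices (length gs) d then c \<alpha> else 0)"
proof -
  have "multi_indices (length gs) d \<subseteq> multi_indices (length gs) (Suc d)"
    by (auto simp: multi_indices_def)
  then show ?thesis
    unfolding monomial_expansion_def fun_eq_iff
    by (auto intro!: sum.mono_neutral_cong_left finite_multi_indices)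
qed

lemma monomial_expansion_mult:
  assumes "i < length gs"
  shows "(gs ! i) x * monomial_expansion gs d c x
    = monomial_expansion gs (Suc d) (\<lambda>\<beta>. \<Sum>\<alpha>\<in>multi_indices (length gs) d. if \<alpha>(i := Suc (\<alpha> i)) = \<beta> then c \<alpha> else 0) x"
proof -
  let ?M = "multi_indices (length gs)" and ?P = "\<lambda>\<alpha>. \<Prod>j<length gs. (gs ! j) x ^ \<alpha> j"
  let ?up = "\<lambda>\<alpha>. \<alpha>(i := Suc (\<alpha> i))"
  have up_mem: "?up \<alpha> \<in> ?M (Suc d)" if "\<alpha> \<in> ?M d" for \<alpha>
    using that assms sum_fun_upd_Suc[OF assms, of \<alpha>] by (auto simp: multi_indices_def)
  have "monomial_expansion gs (Suc d) (\<lambda>\<beta>. \<Sum>\<alpha>\<in>?M d. if ?up \<alpha> = \<beta> then c \<alpha> else 0) x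
      = (\<Sum>\<alpha>\<in>?M d. \<Sum>\<beta>\<in>?M (Suc d). if ?up \<alpha> = \<beta> then c \<alpha> * ?P (?up \<alpha>) else 0)"
    unfolding monomial_expansion_def sum_distrib_right
    by (subst sum.swap) (auto intro!: sum.cong)
  also have "\<dots> = (\<Sum>\<alpha>\<in>?M d. c \<alpha> * ?P (?up \<alpha>))"
    using up_mem finite_multi_indices by (simp add: sum.delta)
  also have "\<dots> = (gs ! i) x * monomial_expansion gs d c x"
    using prod_power_fun_upd_Suc[OF assms, of "\<lambda>j. (gs ! j) x"]
    by (simp add: monomial_expansion_def sum_distrib_left ac_simps)
  finally show ?thesis ..
qed

lemma poly_in_imp_monomial_expansion:
  assumes "poly_in E d p" "E \<subseteq> set gs"
  shows "\<exists>c. p = monomial_expansion gs d c"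
  using assms
proof (induction rule: poly_in.induct)
  case (poly_in_const d a)
  then show ?case using monomial_expansion_const by blast
next
  case (poly_in_add d p q)
  then show ?case by (auto simp: fun_eq_iff monomial_expansion_add)
next
  case (poly_in_scale d p a)
  then show ?case by (auto simp: fun_eq_iff monomial_expansion_scale)
next
  case (poly_in_mult g d p)
  then obtain i where "i < length gs" "g = gs ! i"
    by (metis in_set_conv_nth subsetD)
  with poly_in_mult show ?case by (auto simp: fun_eq_iff monomial_expansion_mult)
next
  case (poly_in_Suc d p)
  then show ?case using monomial_expansion_Suc by blast
qed

section \<open>Interpolation bases\<close>

interpretation fun_vs: vector_space "\<lambda>(c::'b::field) (f::'a \<Rightarrow> 'b) x. c * f x"
  by unfold_locales (simp_all add: fun_eq_iff algebra_simps)

lemma sum_fun_apply: "(\<Sum>i\<in>I. f i) x = (\<Sum>i\<in>I. f i x)"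
  by (induction I rule: infinite_finite_induct) auto

definition interpolant :: "nat \<Rightarrow> (nat \<Rightarrow> 'a \<Rightarrow> 'b::field) \<Rightarrow> (nat \<Rightarrow> 'a) \<Rightarrow> ('a \<Rightarrow> 'b) \<Rightarrow> 'a \<Rightarrow> 'b" where
  "interpolant r e p \<phi> x = (\<Sum>j<r. \<phi> (p j) * e j x)"

definition interpolation_basis :: "('a \<Rightarrow> 'b::field) set \<Rightarrow> nat \<Rightarrow> (nat \<Rightarrow> 'a \<Rightarrow> 'b) \<Rightarrow> (nat \<Rightarrow> 'a) \<Rightarrow> bool" where
  "interpolation_basis V r e p \<longleftrightarrow>
     (\<forall>j<r. e j \<in> V) \<and> (\<forall>j<r. \<forall>l<r. e j (p l) = (if j = l then 1 else 0)) \<and>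
     (\<forall>\<phi>\<in>V. interpolant r e p \<phi> = \<phi>)"

lemma interpolant_in_span:
  assumes "\<forall>j<r. e j \<in> fun_vs.span S"
  shows "interpolant r e p \<phi> \<in> fun_vs.span S"
proof -
  have "interpolant r e p \<phi> = (\<Sum>j<r. (\<lambda>x. \<phi> (p j) * e j x))"
    by (simp add: interpolant_def fun_eq_iff sum_fun_apply)
  also have "\<dots> \<in> fun_vs.span S"
    using assms by (intro fun_vs.span_sum fun_vs.span_scale) auto
  finally show ?thesis .
qed

lemma interpolant_at_node:
  assumes "\<forall>j<r. \<forall>l<r. e j (p l) = (if j = l then 1 else 0)" "l < r"
  shows "interpolant r e p \<phi> (p l) = \<phi> (p l)"
proof -
  have "interpolant r e p \<phi> (p l) = (\<Sum>j<r. if j = l then \<phi> (p j) else 0)"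
    unfolding interpolant_def using assms by (intro sum.cong) auto
  then show ?thesis
    using assms(2) by simp
qed

lemma interpolant_diff_scale:
  "interpolant r e p (\<lambda>x. \<phi> x - k * b x) x = interpolant r e p \<phi> x - k * interpolant r e p b x"
  by (simp add: interpolant_def algebra_simps sum_subtractf sum_distrib_left)

lemma interpolant_Suc_node:
  "interpolant (Suc r) (\<lambda>j x. if j < r then e j x - e j q * \<rho> x / \<rho> q else \<rho> x / \<rho> q) (p(r := q)) \<phi> x
     = interpolant r e p \<phi> x + (\<phi> q - interpolant r e p \<phi> q) * (\<rho> x / \<rho> q)"
proof -
  define c where "c = \<rho> x / \<rho> q"
  have "interpolant (Suc r) (\<lambda>j x. if j < r then e j x - e j q * \<rho> x / \<rho> q else \<rho> x / \<rho> q) (p(r := q)) \<phi> x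
      = (\<Sum>j<r. \<phi> (p j) * (e j x - e j q * c)) + \<phi> q * c"
    unfolding interpolant_def c_def by simp
  also have "\<dots> = interpolant r e p \<phi> x + (\<phi> q - interpolant r e p \<phi> q) * c"
    by (simp add: interpolant_def algebra_simps sum_subtractf sum_distrib_left)
  finally show ?thesis
    by (simp only: c_def)
qed

lemma interpolant_insert_eq:
  fixes b :: "'a \<Rightarrow> 'b::field"
  assumes basis: "interpolation_basis (fun_vs.span S) r e p"
    and \<rho>_def: "\<rho> = b - interpolant r e p b" and \<rho>q: "\<rho> q \<noteq> 0"
    and \<phi>: "\<phi> \<in> fun_vs.span (insert b S)"
  shows "interpolant (Suc r) (\<lambda>j x. if j < r then e j x - e j q * \<rho> x / \<rho> q else \<rho> x / \<rho> q) (p(r := q)) \<phi>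
    = \<phi>"
proof
  fix x
  obtain k where "\<phi> - (\<lambda>x. k * b x) \<in> fun_vs.span S"
    using \<phi> unfolding fun_vs.span_insert by blast
  then have "interpolant r e p (\<lambda>x. \<phi> x - k * b x) = (\<lambda>x. \<phi> x - k * b x)"
    using basis by (simp add: interpolation_basis_def fun_diff_def)
  then have "interpolant r e p \<phi> y - k * interpolant r e p b y = \<phi> y - k * b y" for y
    by (metis interpolant_diff_scale)
  then have old: "interpolant r e p \<phi> y = \<phi> y - k * \<rho> y" for y
    by (simp add: \<rho>_def algebra_simps)
  show "interpolant (Suc r) (\<lambda>j x. if j < r then e j x - e j q * \<rho> x / \<rho> q else \<rho> x / \<rho> q) (p(r := q)) \<phi> x
    = \<phi> x"
    using \<rho>q by (simp add: interpolant_Suc_node old)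
qed

text \<open>The part rho of b not reproduced by the interpolant vanishes at the old nodes, so any point
  q with rho q \<noteq> 0 can serve as a new node.\<close>

lemma interpolation_basis_extend:
  fixes b :: "'a \<Rightarrow> 'b::field"
  assumes basis: "interpolation_basis (fun_vs.span S) r e p"
    and \<rho>_def: "\<rho> = b - interpolant r e p b" and \<rho>q: "\<rho> q \<noteq> 0"
  shows "interpolation_basis (fun_vs.span (insert b S)) (Suc r)
           (\<lambda>j x. if j < r then e j x - e j q * \<rho> x / \<rho> q else \<rho> x / \<rho> q) (p(r := q))"
    (is "interpolation_basis ?V (Suc r) ?e ?p")
proof -
  have e_span: "\<forall>j<r. e j \<in> fun_vs.span S"
   and biorth: "\<forall>j<r. \<forall>l<r. e j (p l) = (if j = l then 1 else 0)"
    using basis by (auto simp: interpolation_basis_def)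
  have span_S: "fun_vs.span S \<subseteq> ?V"
    by (rule fun_vs.span_mono) auto
  have "b \<in> ?V"
    by (rule fun_vs.span_base) simp
  moreover have "interpolant r e p b \<in> ?V"
    using interpolant_in_span[OF e_span] span_S by blast
  ultimately have \<rho>_span: "\<rho> \<in> ?V"
    unfolding \<rho>_def by (rule fun_vs.span_diff)
  have \<rho>_node: "\<rho> (p l) = 0" if "l < r" for l
    using interpolant_at_node[of r e p l b] biorth that by (simp add: \<rho>_def)
  have "?e j \<in> ?V" if "j < Suc r" for j
  proof (cases "j < r")
    case True
    then have eq: "?e j = e j - (\<lambda>x. (e j q / \<rho> q) * \<rho> x)"
      by (simp add: fun_eq_iff)
    have "e j \<in> ?V"
      using True e_span span_S by blast
    moreover have "(\<lambda>x. (e j q / \<rho> q) * \<rho> x) \<in> ?V"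
      using \<rho>_span by (rule fun_vs.span_scale)
    ultimately show ?thesis
      unfolding eq by (rule fun_vs.span_diff)
  next
    case False
    then have eq: "?e j = (\<lambda>x. (1 / \<rho> q) * \<rho> x)"
      by (simp add: fun_eq_iff)
    show ?thesis
      unfolding eq using \<rho>_span by (rule fun_vs.span_scale)
  qed
  moreover have "?e j (?p l) = (if j = l then 1 else 0)" if "j < Suc r" "l < Suc r" for j l
    using that biorth \<rho>_node \<rho>q by (auto simp: less_Suc_eq)
  moreover have "interpolant (Suc r) ?e ?p \<phi> = \<phi>" if "\<phi> \<in> ?V" for \<phi>
    using interpolant_insert_eq[OF basis \<rho>_def \<rho>q that] .
  ultimately show ?thesis
    by (auto simp: interpolation_basis_def)
qed

lemma finite_span_interpolation_basis:
  assumes "finite S"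
  shows "\<exists>r e p. interpolation_basis (fun_vs.span S) r e p"
  using assms
proof (induction rule: finite_induct)
  case empty
  show ?case
    by (rule exI[of _ 0]) (simp add: interpolation_basis_def interpolant_def fun_vs.span_empty zero_fun_def)
next
  case (insert b S)
  then obtain r e p where basis: "interpolation_basis (fun_vs.span S) r e p"
    by blast
  define \<rho> where "\<rho> = b - interpolant r e p b"
  show ?case
  proof (cases "\<rho> = 0")
    case False
    then obtain q where "\<rho> q \<noteq> 0"
      by (auto simp: fun_eq_iff)
    then show ?thesis
      using interpolation_basis_extend[OF basis \<rho>_def] by blast
  next
    case True
    then have "b = interpolant r e p b"
      by (simp add: \<rho>_def)
    also have "\<dots> \<in> fun_vs.span S"
      using basis by (intro interpolant_in_span) (simp add: interpolation_basis_def)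
    finally have "fun_vs.span (insert b S) = fun_vs.span S"
      by (rule fun_vs.span_redundant)
    then show ?thesis
      using basis by auto
  qed
qed

lemma span_interpolation_basis:
  assumes "finite T" "V \<subseteq> fun_vs.span T"
  shows "\<exists>r e p. interpolation_basis (fun_vs.span V) r e p"
proof -
  obtain B where B: "B \<subseteq> V" "fun_vs.independent B" "V \<subseteq> fun_vs.span B"
    by (rule fun_vs.maximal_independent_subset)
  have "finite B"
    using fun_vs.independent_span_bound[OF assms(1) B(2)] B(1) assms(2) by blast
  moreover have "fun_vs.span V = fun_vs.span B"
    unfolding fun_vs.span_eq using B(1,3) fun_vs.span_superset by blast
  ultimately show ?thesis
    using finite_span_interpolation_basis by simp
qed

section \<open>Decomposition into 1-primitive elements\<close>

lemma additive_imp_1_primitive: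
  assumes add: "\<And>x y. g (x + y) = g x + g y" and "g a \<noteq> 0"
  shows "k_primitive 1 g"
proof -
  have "g 0 = 0"
    using add[of 0 0] by simp
  then have "coder g 0 [a] \<noteq> 0"
    using \<open>g a \<noteq> 0\<close> by simp
  moreover have "coder_deg_le g 1"
    unfolding coder_deg_le_iff_exact numeral_2_eq_2[symmetric]
    by (auto simp: length_Suc_conv add algebra_simps)
  ultimately show ?thesis
    unfolding k_primitive_iff_coder_deg_le by (metis One_nat_def length_Cons list.size(3))
qed

lemma subspace_additive_funs:
  "fun_vs.subspace {\<phi> :: 'a::ab_group_add \<Rightarrow> 'b::field. \<forall>x y. \<phi> (x + y) = \<phi> x + \<phi> y}"
  unfolding fun_vs.subspace_def by (auto simp: algebra_simps)

lemma coproduct_algebra_subspace: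
  assumes "coproduct_algebra A"
  shows "fun_vs.subspace A"
  using assms unfolding fun_vs.subspace_def coproduct_algebra_def zero_fun_def plus_fun_def
  by blast

lemma coder_slices_in_finite_span:
  assumes A: "coproduct_algebra A" and "h \<in> A"
  obtains T where "finite T" "T \<subseteq> A" "\<And>zs. (\<lambda>y. coder h 0 (y # zs)) \<in> fun_vs.span T"
proof -
  obtain N h' h'' where h'A: "\<forall>i<(N::nat). h' i \<in> A \<and> h'' i \<in> A"
    and coproduct: "\<forall>x y. h (x + y) = (\<Sum>i<N. h' i x * h'' i y)"
    using A \<open>h \<in> A\<close> unfolding coproduct_algebra_def by blast
  define T where "T = insert (\<lambda>_. 1) (h' ` {..<N})"
  have one: "(\<lambda>_. 1) \<in> fun_vs.span T"
    by (rule fun_vs.span_base) (simp add: T_def)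
  have translates: "(\<lambda>x. coder h (x + t) zs) \<in> fun_vs.span T" for zs t
  proof (induction zs arbitrary: t)
    case Nil
    have "(\<lambda>x. coder h (x + t) []) = (\<Sum>i<N. (\<lambda>x. h'' i t * h' i x))"
      by (simp add: fun_eq_iff coproduct mult.commute sum_fun_apply)
    also have "\<dots> \<in> fun_vs.span T"
      by (intro fun_vs.span_sum fun_vs.span_scale fun_vs.span_base) (simp add: T_def)
    finally show ?case .
  next
    case (Cons y zs)
    have "(\<lambda>x. coder h (x + t) (y # zs)) = (\<lambda>x. coder h (x + (t + y)) zs) - (\<lambda>x. coder h (x + t) zs)"
      by (simp add: fun_eq_iff add.assoc)
    also have "\<dots> \<in> fun_vs.span T"
      by (rule fun_vs.span_diff[OF Cons.IH Cons.IH])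
    finally show ?case .
  qed
  have "(\<lambda>y. coder h 0 (y # zs)) = (\<lambda>y. coder h (y + 0) zs) - (\<lambda>y. coder h 0 zs * 1)" for zs
    by (simp add: fun_eq_iff)
  then have "(\<lambda>y. coder h 0 (y # zs)) \<in> fun_vs.span T" for zs
    using translates fun_vs.span_scale[OF one] by (metis fun_vs.span_diff)
  moreover have "T \<subseteq> A"
    using A h'A unfolding T_def coproduct_algebra_def by auto
  moreover have "finite T"
    by (simp add: T_def)
  ultimately show ?thesis
    using that by blast
qed

lemma top_coder_1_primitive_expansion:
  assumes A: "coproduct_algebra A" and "h \<in> A" and deg: "coder_deg_le h (Suc e)"
  shows "\<exists>(r::nat) g p. (\<forall>j<r. g j \<in> A \<and> k_primitive 1 (g j)) \<and>
           (\<forall>ps zs x. length ps + length zs = e \<longrightarrow>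
              coder h 0 (ps @ x # zs) = (\<Sum>j<r. coder h 0 (ps @ p j # zs) * g j x))"
proof -
  obtain T where "finite T" "T \<subseteq> A" and slices_T: "\<And>zs. (\<lambda>y. coder h 0 (y # zs)) \<in> fun_vs.span T"
    using coder_slices_in_finite_span[OF A \<open>h \<in> A\<close>] by blast
  define \<Phi> where "\<Phi> = {(\<lambda>y. coder h 0 (y # zs)) | zs. length zs = e}"
  have "\<Phi> \<subseteq> fun_vs.span T"
    using slices_T by (auto simp: \<Phi>_def)
  then obtain r g p where basis: "interpolation_basis (fun_vs.span \<Phi>) r g p"
    using span_interpolation_basis[OF \<open>finite T\<close>] by blast
  have "fun_vs.span \<Phi> \<subseteq> fun_vs.span T"
    using \<open>\<Phi> \<subseteq> fun_vs.span T\<close> by (rule fun_vs.span_minimal[OF _ fun_vs.subspace_span])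
  also have "\<dots> \<subseteq> A"
    using \<open>T \<subseteq> A\<close> by (rule fun_vs.span_minimal[OF _ coproduct_algebra_subspace[OF A]])
  finally have "fun_vs.span \<Phi> \<subseteq> A" .
  moreover have "fun_vs.span \<Phi> \<subseteq> {\<phi>. \<forall>x y. \<phi> (x + y) = \<phi> x + \<phi> y}"
    using coder_top_additive[OF deg] by (intro fun_vs.span_minimal subspace_additive_funs) (auto simp: \<Phi>_def)
  ultimately have g_props: "g j \<in> A \<and> k_primitive 1 (g j)" if "j < r" for j
    using basis that additive_imp_1_primitive[of "g j" "p j"] by (auto simp: interpolation_basis_def)
  have expansion: "coder h 0 (ps @ x # zs) = (\<Sum>j<r. coder h 0 (ps @ p j # zs) * g j x)"
    if "length ps + length zs = e" for ps zs x
  proof -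
    have "(\<lambda>y. coder h 0 (y # ps @ zs)) \<in> fun_vs.span \<Phi>"
      using that by (intro fun_vs.span_base) (auto simp: \<Phi>_def)
    then have "interpolant r g p (\<lambda>y. coder h 0 (y # ps @ zs)) x = coder h 0 (x # ps @ zs)"
      using basis by (simp add: interpolation_basis_def del: coder.simps)
    then show ?thesis
      by (simp add: interpolant_def coder_move_to_front del: coder.simps)
  qed
  show ?thesis
    using g_props expansion by blast
qed

lemma top_coder_diagonal_poly_in_1_primitives:
  assumes A: "coproduct_algebra A" and "h \<in> A" and "coder_deg_le h (Suc e)"
  shows "\<exists>G. finite G \<and> G \<subseteq> A \<and> (\<forall>g\<in>G. k_primitive 1 g) \<and>
           poly_in G (Suc e) (\<lambda>x. coder h 0 (replicate (Suc e) x))"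
proof -
  obtain r :: nat and g p where g: "\<forall>j<r. g j \<in> A \<and> k_primitive 1 (g j)"
    and expansion: "\<forall>ps zs x. length ps + length zs = e \<longrightarrow>
           coder h 0 (ps @ x # zs) = (\<Sum>j<r. coder h 0 (ps @ p j # zs) * g j x)"
    using top_coder_1_primitive_expansion[OF assms] by blast
  have "poly_in (g ` {..<r}) l (\<lambda>x. coder h 0 (ps @ replicate l x))" if "length ps + l = Suc e" for ps l
    using expansion[rule_format] that by (rule poly_in_replicate)
  from this[of "[]" "Suc e"] have "poly_in (g ` {..<r}) (Suc e) (\<lambda>x. coder h 0 (replicate (Suc e) x))"
    by (simp only: append_Nil list.size add_0)
  then show ?thesis
    using g by (intro exI[of _ "g ` {..<r}"]) auto
qed

lemma coder_deg_le_imp_poly_in_1_primitives: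
  assumes A: "coproduct_algebra A" and "h \<in> A" "coder_deg_le h d"
  shows "\<exists>E. finite E \<and> E \<subseteq> A \<and> (\<forall>g\<in>E. k_primitive 1 g) \<and> poly_in E d h"
  using assms(2,3)
proof (induction d arbitrary: h)
  case 0
  then have "coder h 0 [x] = 0" for x
    unfolding coder_deg_le_iff_base_0 by (simp del: coder.simps)
  then have "h = (\<lambda>_. h 0)"
    by (simp add: fun_eq_iff)
  then have "poly_in {} 0 h"
    by (metis poly_in_const)
  then show ?case
    by blast
next
  case (Suc e)
  define D where "D = (\<lambda>x. coder h 0 (replicate (Suc e) x))"
  obtain G where G: "finite G" "G \<subseteq> A" "\<forall>g\<in>G. k_primitive 1 g" "poly_in G (Suc e) D"
    using top_coder_diagonal_poly_in_1_primitives[OF A Suc.prems] unfolding D_def by blast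
  have "D \<in> A"
    using G(4,2) A by (rule poly_in_mem_coproduct_algebra)
  define h1 where "h1 = (\<lambda>x. h x - D x / fact (Suc e))"
  have "h1 = h - (\<lambda>x. (1 / fact (Suc e)) * D x)"
    by (simp add: h1_def fun_eq_iff)
  also have "\<dots> \<in> A"
    using coproduct_algebra_subspace[OF A] Suc.prems(1) \<open>D \<in> A\<close>
    by (intro fun_vs.subspace_diff fun_vs.subspace_scale)
  finally have "h1 \<in> A" .
  moreover have "coder_deg_le h1 e"
    using coder_deg_le_sub_diagonal[OF Suc.prems(2)] by (simp add: h1_def D_def)
  ultimately have "\<exists>E. finite E \<and> E \<subseteq> A \<and> (\<forall>g\<in>E. k_primitive 1 g) \<and> poly_in E e h1"
    by (rule Suc.IH)
  then obtain E where E: "finite E" "E \<subseteq> A" "\<forall>g\<in>E. k_primitive 1 g" "poly_in E e h1"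
    by blast
  have "poly_in (E \<union> G) (Suc e) h1"
    using E(4) by (rule poly_in_Suc[OF poly_in_mono]) simp
  moreover have "poly_in (E \<union> G) (Suc e) (\<lambda>x. (1 / fact (Suc e)) * D x)"
    using G(4) by (rule poly_in_scale[OF poly_in_mono]) simp
  ultimately have "poly_in (E \<union> G) (Suc e) (\<lambda>x. h1 x + (1 / fact (Suc e)) * D x)"
    by (rule poly_in_add)
  also have "(\<lambda>x. h1 x + (1 / fact (Suc e)) * D x) = h"
    by (simp add: h1_def fun_eq_iff)
  finally show ?case
    using E G by (intro exI[of _ "E \<union> G"]) auto
qed

theorem mainTheorem2:
  fixes A :: "('a::ab_group_add \<Rightarrow> complex) set" and f :: "'a \<Rightarrow> complex" and k :: nat
  assumes "coproduct_algebra A"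
    and "k \<ge> 1"
    and "f \<in> A"
    and "k_primitive k f"
  shows "\<exists>(n::nat) (g :: nat \<Rightarrow> 'a \<Rightarrow> complex) (c :: (nat \<Rightarrow> nat) \<Rightarrow> complex).
           (\<forall>i<n. g i \<in> A \<and> k_primitive 1 (g i)) \<and>
           (\<forall>x. f x = (\<Sum>\<alpha>\<in>multi_indices n k. c \<alpha> * (\<Prod>i<n. g i x ^ \<alpha> i)))"
proof -
  have "coder_deg_le f k"
    using assms(4) by (simp add: k_primitive_iff_coder_deg_le)
  then obtain E where E: "finite E" "E \<subseteq> A" "\<forall>g\<in>E. k_primitive 1 g" "poly_in E k f"
    using coder_deg_le_imp_poly_in_1_primitives[OF assms(1,3)] by blast
  obtain gs where gs: "set gs = E"
    using finite_list[OF E(1)] by blast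
  then obtain c where "f = monomial_expansion gs k c"
    using poly_in_imp_monomial_expansion[OF E(4)] by blast
  moreover have "\<forall>i<length gs. gs ! i \<in> A \<and> k_primitive 1 (gs ! i)"
    using E(2,3) gs nth_mem by blast
  ultimately show ?thesis
    by (intro exI[of _ "length gs"] exI[of _ "nth gs"] exI[of _ c]) (simp add: monomial_expansion_def)
qed

end
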